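(* Let $\phi:[0,1]\to[0,1]$ be a nondecreasing continuous function such that $\phi(x)>x$ for all $x\in(0,1)$, and let $V_\phi$ be the operator on $L_2[0,1]$ given by $(V_\phi f)(x)=\int_0^{\phi(x)}f(t)\,dt$. Then its Fredholm determinant is $$D_{V_\phi}(\lambda)=1+\sum_{n=1}^\infty(-1)^n\lambda^n\int_0^1\int_{\phi(t_1)}^1\cdots\int_{\phi(t_{n-1})}^1 dt_n\cdots dt_1 .$$
   Context: $V_\phi$ is the integral operator $(V_\phi f)(x)=\int_0^1 k(x,t)f(t)\,dt$ with bounded kernel $k(x,t)=1$ if $t\le\phi(x)$ and $k(x,t)=0$ if $t>\phi(x)$. For an integral operator $K$ on $L_2[0,1]$ with bounded kernel $k(x,t)$, its Fredholm determinant is $D_K(\lambda)=\sum_{n=0}^\infty\frac{(-1)^n}{n!}A_n\lambda^n$, where $A_0=1$ and for $n\ge1$, $A_n=\int_0^1\cdots\int_0^1\det\big(k(t_i,t_j)\big)_{i,j=1}^n\,dt_1\cdots dt_n$. *)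

theory Defs
  imports "HOL-Probability.Probability" "Jordan_Normal_Form.Determinant"
begin

definition Vphi_kernel :: "(real \<Rightarrow> real) \<Rightarrow> real \<Rightarrow> real \<Rightarrow> real" where
  "Vphi_kernel \<phi> x t = (if t \<le> \<phi> x then 1 else 0)"

definition fred_A :: "(real \<Rightarrow> real \<Rightarrow> real) \<Rightarrow> nat \<Rightarrow> real" where
  "fred_A k n = (\<integral> t. det (mat n n (\<lambda>(i,j). k (t i) (t j)))
      \<partial>(PiM {..<n} (\<lambda>_. restrict_space lborel {0..1})))"

definition fred_term :: "(real \<Rightarrow> real \<Rightarrow> real) \<Rightarrow> complex \<Rightarrow> nat \<Rightarrow> complex" where
  "fred_term k z n = ((-1)^n / of_nat (fact n)) * of_real (fred_A k n) * z^n"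

definition fredholm_det :: "(real \<Rightarrow> real \<Rightarrow> real) \<Rightarrow> complex \<Rightarrow> complex" where
  "fredholm_det k z = (\<Sum>n. fred_term k z n)"

fun iter_inner :: "(real \<Rightarrow> real) \<Rightarrow> nat \<Rightarrow> real \<Rightarrow> real" where
  "iter_inner \<phi> 0 s = 1"
| "iter_inner \<phi> (Suc m) s = integral {\<phi> s..1} (iter_inner \<phi> m)"

definition iter_int :: "(real \<Rightarrow> real) \<Rightarrow> nat \<Rightarrow> real" where
  "iter_int \<phi> n = integral {0..1} (iter_inner \<phi> (n - 1))"

end

theory Submission
  imports Defs
begin

text \<open>For points \<open>t\<^sub>1, \<dots>, t\<^sub>n \<in> [0,1]\<close> the kernel matrix has entries \<open>[t\<^sub>j \<le> \<phi>(t\<^sub>i)]\<close>. Call the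
  points a \<open>\<phi>\<close>-chain if they are distinct and \<open>t\<^sub>i < t\<^sub>k\<close> implies \<open>\<phi>(t\<^sub>i) < t\<^sub>k\<close>. Since
  \<open>x \<le> \<phi>(x)\<close>, for a \<open>\<phi>\<close>-chain the matrix is the order matrix \<open>[t\<^sub>j \<le> t\<^sub>i]\<close> of distinct reals,
  whose determinant is 1 because only the identity permutation contributes; otherwise two rows
  coincide and the determinant vanishes. So \<open>A\<^sub>n\<close> is the volume of the set of \<open>\<phi>\<close>-chains in
  \<open>[0,1]\<^sup>n\<close>. Integrating out the least point of a chain reproduces the recursion of the iterated
  integrals, with a factor \<open>n\<close> for the choice of that point, so \<open>A\<^sub>n = n! I\<^sub>n\<close>; and \<open>A\<^sub>n \<le> 1\<close>
  makes the Fredholm series converge absolutely.\<close>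

lemma inj_on_pointwise_le_imp_eq:
  fixes f g :: "'a \<Rightarrow> 'b::ordered_cancel_comm_monoid_add"
  assumes "finite B" "card B \<le> card A" "inj_on f A" "inj_on g A" "f ` A \<subseteq> B" "g ` A \<subseteq> B"
    and "\<And>x. x \<in> A \<Longrightarrow> g x \<le> f x" and "x \<in> A"
  shows "f x = g x"
proof -
  have "finite A" using assms(1,3,5) by (meson finite_imageD finite_subset)
  have onto: "h ` A = B" if "inj_on h A" "h ` A \<subseteq> B" for h :: "'a \<Rightarrow> 'b"
    using card_subset_eq[OF assms(1) that(2)] assms(2) card_image[OF that(1)]
      card_mono[OF assms(1) that(2)] by simp
  have "f ` A = g ` A" using onto[OF assms(3,5)] onto[OF assms(4,6)] by simp
  hence "sum g A = sum f A"
    using sum.reindex[OF assms(3), of id] sum.reindex[OF assms(4), of id] by simp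
  from sum_mono_inv[OF this assms(7,8) \<open>finite A\<close>] show ?thesis by simp
qed

lemma permutes_eq_id_if_descending:
  fixes t :: "'a \<Rightarrow> 'b::linordered_ab_group_add"
  assumes p: "p permutes A" and fin: "finite A" and inj: "inj_on t A"
    and descending: "\<And>i. i \<in> A \<Longrightarrow> t (p i) \<le> t i"
  shows "p = id"
proof
  fix i
  show "p i = id i"
  proof (cases "i \<in> A")
    case True
    have inj_tp: "inj_on (t \<circ> p) A"
      by (rule comp_inj_on) (simp_all add: permutes_inj_on[OF p] permutes_image[OF p] inj)
    have image_tp: "(t \<circ> p) ` A = t ` A"
      by (simp only: image_comp[symmetric] permutes_image[OF p])
    have "t i = (t \<circ> p) i"
      using descending image_tp card_image[OF inj]
      by (intro inj_on_pointwise_le_imp_eq[OF finite_imageI[OF fin] _ inj inj_tp _ _ _ True]) auto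
    thus ?thesis using inj_onD[OF inj] True permutes_in_image[OF p] by force
  qed (simp add: permutes_not_in[OF p])
qed

lemma det_order_matrix:
  fixes t :: "nat \<Rightarrow> 'a::linordered_ab_group_add"
  assumes "inj_on t {..<n}"
  shows "det (mat n n (\<lambda>(i, j). if t j \<le> t i then 1 else 0)) = (1 :: 'b::comm_ring_1)"
proof -
  let ?A = "mat n n (\<lambda>(i, j). if t j \<le> t i then 1 else 0) :: 'b mat"
  have vanish: "(\<Prod>i = 0..<n. ?A $$ (i, p i)) = 0" if p: "p permutes {0..<n}" "p \<noteq> id" for p
  proof -
    have "\<not> (\<forall>i\<in>{0..<n}. t (p i) \<le> t i)"
      using permutes_eq_id_if_descending[OF p(1) finite_atLeastLessThan
          assms[unfolded lessThan_atLeast0]] p(2)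
      by blast
    then obtain i where i: "i < n" "t i < t (p i)" by (auto simp: not_le)
    moreover have "p i < n" using permutes_in_image[OF p(1)] i by simp
    ultimately show ?thesis by (intro prod_zero bexI[of _ i]) auto
  qed
  have "det ?A = (\<Sum>p \<in> {p. p permutes {0..<n}}. signof p * (\<Prod>i = 0..<n. ?A $$ (i, p i)))"
    by (rule det_def') simp
  also have "\<dots> = (\<Sum>p \<in> {id}. signof p * (\<Prod>i = 0..<n. ?A $$ (i, p i)))"
    using vanish by (intro sum.mono_neutral_right) (auto simp: permutes_id finite_permutations)
  also have "\<dots> = 1" by (simp add: sign_id)
  finally show ?thesis .
qed

lemma card_inj_on_nested:
  fixes key :: "'i \<Rightarrow> 'a::linorder"
  assumes inj: "inj_on F I" and fin: "\<And>l. l \<in> I \<Longrightarrow> finite (F l)"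
    and nested: "\<And>l l'. l \<in> I \<Longrightarrow> l' \<in> I \<Longrightarrow> key l \<le> key l' \<Longrightarrow> F l \<subseteq> F l'"
  shows "inj_on (card \<circ> F) I"
proof (rule inj_onI)
  fix l l' assume l: "l \<in> I" "l' \<in> I" and eq: "(card \<circ> F) l = (card \<circ> F) l'"
  have "F l = F l'"
  proof (cases "key l \<le> key l'")
    case True
    thus ?thesis using card_subset_eq[OF fin[OF l(2)] nested[OF l True]] eq by simp
  next
    case False
    thus ?thesis using card_subset_eq[OF fin[OF l(1)] nested[OF l(2,1)]] eq by simp
  qed
  thus "l = l'" using inj_onD[OF inj] l by blast
qed

text \<open>Rows of the threshold matrix are the index sets \<open>{c. t c \<le> \<psi> (t l)}\<close>. They are nested,
  contain the rank set \<open>{c. t c \<le> t l}\<close>, and exceed it at \<open>i\<close>; if they were pairwise distinct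
  their sizes would be a permutation of the ranks \<open>1, \<dots>, n\<close>, forcing equality everywhere.\<close>
lemma threshold_rows_coincide:
  fixes t :: "nat \<Rightarrow> 'a::linorder" and \<psi> :: "'a \<Rightarrow> 'a"
  assumes inj: "inj_on t {..<n}"
    and mono: "\<And>l l'. l < n \<Longrightarrow> l' < n \<Longrightarrow> t l \<le> t l' \<Longrightarrow> \<psi> (t l) \<le> \<psi> (t l')"
    and above: "\<And>l. l < n \<Longrightarrow> t l \<le> \<psi> (t l)"
    and ik: "i < n" "k < n" "t i < t k" "t k \<le> \<psi> (t i)"
  shows "\<exists>l l'. l \<noteq> l' \<and> l < n \<and> l' < n
    \<and> {c. c < n \<and> t c \<le> \<psi> (t l)} = {c. c < n \<and> t c \<le> \<psi> (t l')}"
proof (rule ccontr)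
  define S where "S l = {c. c < n \<and> t c \<le> \<psi> (t l)}" for l
  define R where "R l = {c. c < n \<and> t c \<le> t l}" for l
  assume "\<not> ?thesis"
  hence "inj_on S {..<n}" unfolding S_def inj_on_def by blast
  hence S_card_inj: "inj_on (card \<circ> S) {..<n}"
    by (rule card_inj_on_nested[where key = t]) (auto simp: S_def dest: mono)
  have "inj_on R {..<n}"
  proof (rule inj_onI)
    fix l l' assume "l \<in> {..<n}" "l' \<in> {..<n}" "R l = R l'"
    hence "t l \<le> t l'" "t l' \<le> t l" unfolding R_def by blast+
    thus "l = l'" using inj_onD[OF inj] \<open>l \<in> {..<n}\<close> \<open>l' \<in> {..<n}\<close> by simp
  qed
  hence R_card_inj: "inj_on (card \<circ> R) {..<n}"
    by (rule card_inj_on_nested[where key = t]) (auto simp: R_def)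
  have fin: "finite (S l)" "finite (R l)" for l unfolding S_def R_def by auto
  have R_sub_S: "R l \<subseteq> S l" if "l < n" for l
    using above[OF that] unfolding R_def S_def by auto
  have sizes: "card (R l) \<in> {1..n}" "card (S l) \<in> {1..n}" if "l < n" for l
  proof -
    have "l \<in> R l" "R l \<subseteq> {..<n}" "S l \<subseteq> {..<n}" using that unfolding R_def S_def by auto
    thus "card (R l) \<in> {1..n}" "card (S l) \<in> {1..n}"
      using R_sub_S[OF that] fin card_mono[of "{..<n}"] by (auto simp: Suc_le_eq card_gt_0_iff)
  qed
  hence sizes_image: "(card \<circ> S) ` {..<n} \<subseteq> {1..n}" "(card \<circ> R) ` {..<n} \<subseteq> {1..n}" by auto
  have "(card \<circ> S) i = (card \<circ> R) i"
    by (rule inj_on_pointwise_le_imp_eq[OF _ _ S_card_inj R_card_inj sizes_image])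
      (simp_all add: card_mono[OF fin(1) R_sub_S] ik(1))
  moreover have "k \<in> S i - R i" using ik unfolding R_def S_def by simp
  hence "R i \<subset> S i" using R_sub_S[OF ik(1)] by blast
  ultimately show False using psubset_card_mono[OF fin(1), of "R i" i] by simp
qed

definition phi_chain :: "(real \<Rightarrow> real) \<Rightarrow> nat set \<Rightarrow> (nat \<Rightarrow> real) \<Rightarrow> bool" where
  "phi_chain \<phi> J t \<longleftrightarrow> inj_on t J \<and> (\<forall>i\<in>J. \<forall>k\<in>J. t i < t k \<longrightarrow> \<phi> (t i) < t k)"

lemma det_kernel_phi_chain:
  assumes above: "\<And>i. i < n \<Longrightarrow> t i \<le> \<phi> (t i)" and chain: "phi_chain \<phi> {..<n} t"
  shows "det (mat n n (\<lambda>(i, j). Vphi_kernel \<phi> (t i) (t j))) = 1"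
proof -
  have "mat n n (\<lambda>(i, j). Vphi_kernel \<phi> (t i) (t j)) = mat n n (\<lambda>(i, j). if t j \<le> t i then 1 else 0)"
  proof (rule cong_mat)
    fix i j assume "i < n" "j < n"
    moreover have "\<not> t j \<le> \<phi> (t i)" if "t i < t j"
      using chain that \<open>i < n\<close> \<open>j < n\<close> unfolding phi_chain_def by force
    ultimately show "(case (i, j) of (i, j) \<Rightarrow> Vphi_kernel \<phi> (t i) (t j))
        = (case (i, j) of (i, j) \<Rightarrow> if t j \<le> t i then 1 else 0)"
      using above[of i] by (auto simp: Vphi_kernel_def)
  qed simp_all
  thus ?thesis using chain unfolding phi_chain_def by (simp add: det_order_matrix)
qed

lemma det_kernel_not_phi_chain:
  assumes mono: "mono_on {0..1} \<phi>" and t: "\<And>i. i < n \<Longrightarrow> t i \<in> {0..1}"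
    and above: "\<And>i. i < n \<Longrightarrow> t i \<le> \<phi> (t i)" and not_chain: "\<not> phi_chain \<phi> {..<n} t"
  shows "det (mat n n (\<lambda>(i, j). Vphi_kernel \<phi> (t i) (t j))) = 0"
proof -
  let ?A = "mat n n (\<lambda>(i, j). Vphi_kernel \<phi> (t i) (t j))"
  obtain l l' where ll: "l \<noteq> l'" "l < n" "l' < n"
    and rows: "{c. c < n \<and> t c \<le> \<phi> (t l)} = {c. c < n \<and> t c \<le> \<phi> (t l')}"
  proof (cases "inj_on t {..<n}")
    case False
    then obtain l l' where "l \<in> {..<n}" "l' \<in> {..<n}" "l \<noteq> l'" "t l = t l'"
      unfolding inj_on_def by blast
    thus ?thesis by (intro that[of l l']) auto
  next
    case True
    then obtain i k where ik: "i < n" "k < n" "t i < t k" "t k \<le> \<phi> (t i)"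
      using not_chain unfolding phi_chain_def by (auto simp: not_less)
    have mono_t: "\<phi> (t l) \<le> \<phi> (t l')" if "l < n" "l' < n" "t l \<le> t l'" for l l'
      using mono_onD[OF mono] t that by simp
    have "\<exists>l l'. l \<noteq> l' \<and> l < n \<and> l' < n
        \<and> {c. c < n \<and> t c \<le> \<phi> (t l)} = {c. c < n \<and> t c \<le> \<phi> (t l')}"
      by (rule threshold_rows_coincide[of t n \<phi> i k]) (use True mono_t above ik in auto)
    thus ?thesis by (elim exE conjE) (rule that)
  qed
  have "row ?A l = row ?A l'"
  proof (rule eq_vecI)
    fix c assume "c < dim_vec (row ?A l')"
    hence "c < n" by simp
    moreover have "c \<in> {c. c < n \<and> t c \<le> \<phi> (t l)} \<longleftrightarrow> c \<in> {c. c < n \<and> t c \<le> \<phi> (t l')}"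
      by (simp only: rows)
    ultimately have "t c \<le> \<phi> (t l) \<longleftrightarrow> t c \<le> \<phi> (t l')" by simp
    thus "row ?A l $ c = row ?A l' $ c" using \<open>c < n\<close> ll by (simp add: Vphi_kernel_def)
  qed simp
  thus ?thesis by (rule det_identical_rows[OF mat_carrier ll])
qed

lemma self_le_phi:
  fixes \<phi> :: "real \<Rightarrow> real"
  assumes mono: "mono_on {0..1} \<phi>" and im: "\<phi> ` {0..1} \<subseteq> {0..1}"
    and gt: "\<forall>x\<in>{0<..<1}. \<phi> x > x" and x: "x \<in> {0..1}"
  shows "x \<le> \<phi> x"
proof -
  consider "x = 0" | "x \<in> {0<..<1}" | "x = 1" using x by fastforce
  thus ?thesis
  proof cases
    case 1
    thus ?thesis using im by (auto simp: image_subset_iff)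
  next
    case 2
    thus ?thesis using gt by (simp add: less_imp_le)
  next
    case 3
    have "1 \<le> \<phi> 1"
    proof (rule dense_le_bounded[of 0])
      fix y :: real assume "0 < y" "y < 1"
      thus "y \<le> \<phi> 1" using gt mono_onD[OF mono, of y 1] by force
    qed simp
    thus ?thesis using 3 by simp
  qed
qed

lemma continuous_on_iter_inner:
  assumes cont: "continuous_on {0..1} \<phi>" and im: "\<phi> ` {0..1} \<subseteq> {0..1}"
  shows "continuous_on {0..1} (iter_inner \<phi> m)"
proof (induction m)
  case (Suc m)
  have "continuous_on {0..1} (\<lambda>x. integral {x..1} (iter_inner \<phi> m))"
    by (rule indefinite_integral_continuous_1'[OF integrable_continuous_interval[OF Suc]])
  from continuous_on_compose2[OF this cont im] show ?case by simp
qed simp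

lemma iter_inner_nonneg:
  assumes cont: "continuous_on {0..1} \<phi>" and im: "\<phi> ` {0..1} \<subseteq> {0..1}"
  shows "x \<in> {0..1} \<Longrightarrow> 0 \<le> iter_inner \<phi> m x"
proof (induction m arbitrary: x)
  case (Suc m)
  have "{\<phi> x..1} \<subseteq> {0..1}" using im Suc.prems by (auto simp: image_subset_iff)
  moreover have "iter_inner \<phi> m integrable_on {0..1}"
    by (rule integrable_continuous_interval[OF continuous_on_iter_inner[OF cont im]])
  ultimately show ?case
    using Suc.IH by (auto intro!: integral_nonneg intro: integrable_on_subinterval)
qed simp

definition tail_integral :: "(real \<Rightarrow> real) \<Rightarrow> nat \<Rightarrow> real \<Rightarrow> real" where
  "tail_integral \<phi> m b = (case m of 0 \<Rightarrow> 1 | Suc m' \<Rightarrow> integral {max 0 b..1} (iter_inner \<phi> m'))"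

lemma tail_integral_phi:
  assumes "\<phi> x \<in> {0..1}"
  shows "tail_integral \<phi> m (\<phi> x) = iter_inner \<phi> m x"
  using assms by (cases m) (simp_all add: tail_integral_def max_def)

lemma tail_integral_nonneg:
  assumes cont: "continuous_on {0..1} \<phi>" and im: "\<phi> ` {0..1} \<subseteq> {0..1}"
  shows "0 \<le> tail_integral \<phi> m b"
proof (cases m)
  case (Suc m')
  have "iter_inner \<phi> m' integrable_on {0..1}"
    by (rule integrable_continuous_interval[OF continuous_on_iter_inner[OF cont im]])
  hence "iter_inner \<phi> m' integrable_on {max 0 b..1}"
    by (rule integrable_on_subinterval) auto
  thus ?thesis
    using Suc iter_inner_nonneg[OF cont im] by (auto simp: tail_integral_def intro!: integral_nonneg)
qed (simp add: tail_integral_def)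

abbreviation unit_cube :: "nat set \<Rightarrow> (nat \<Rightarrow> real) measure" where
  "unit_cube J \<equiv> PiM J (\<lambda>_. restrict_space lborel {0..1})"

lemma prob_space_unit_interval: "prob_space (restrict_space lborel {0..1::real})"
  by (rule prob_space_restrict_space) auto

lemma borel_measurable_indicator_of_pred:
  "Measurable.pred M (\<lambda>x. x \<in> A) \<Longrightarrow> indicator A \<in> borel_measurable M"
  using borel_measurable_indicator'[where f = "\<lambda>x. x" and A = "\<lambda>_. A"] by (simp add: pred_def)

lemma unit_cube_coordinate: "t \<in> space (unit_cube J) \<Longrightarrow> i \<in> J \<Longrightarrow> t i \<in> {0..1}"
  by (auto simp: space_PiM PiE_def Pi_def)

lemma measurable_unit_cube_component:
  assumes "i \<in> J"
  shows "(\<lambda>t. t i) \<in> borel_measurable (unit_cube J)"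
proof -
  have "(\<lambda>x. x) \<in> borel_measurable (restrict_space lborel {0..1::real})"
    by (rule measurable_restrict_space1) (rule measurable_ident_sets, simp)
  from measurable_compose[OF measurable_component_singleton[OF assms] this] show ?thesis by simp
qed

lemma measurable_unit_cube_phi_component:
  assumes cont: "continuous_on {0..1} \<phi>" and "i \<in> J"
  shows "(\<lambda>t. \<phi> (t i)) \<in> borel_measurable (unit_cube J)"
proof -
  have "\<phi> \<in> borel_measurable (restrict_space borel {0..1::real})"
    by (rule borel_measurable_continuous_on_restrict[OF cont])
  hence "\<phi> \<in> borel_measurable (restrict_space lborel {0..1::real})"
    by (simp cong: measurable_cong_sets sets_restrict_space_cong)
  from measurable_compose[OF measurable_component_singleton[OF \<open>i \<in> J\<close>] this] show ?thesis
    by simp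
qed

lemma pred_phi_chain:
  assumes cont: "continuous_on {0..1} \<phi>" and "finite K" "K \<subseteq> J"
  shows "Measurable.pred (unit_cube J) (phi_chain \<phi> K)"
  unfolding phi_chain_def inj_on_def using assms
  by (intro pred_intros_finite(3) pred_intros_logic borel_measurable_pred_less measurable_const
      borel_measurable_eq[folded pred_def] measurable_unit_cube_component
      measurable_unit_cube_phi_component) auto

definition phi_chains_above :: "(real \<Rightarrow> real) \<Rightarrow> nat set \<Rightarrow> real \<Rightarrow> (nat \<Rightarrow> real) set" where
  "phi_chains_above \<phi> J b = {t. phi_chain \<phi> J t \<and> (\<forall>j\<in>J. b < t j)}"

text \<open>When \<open>x \<le> \<phi> x\<close>, these are the \<open>\<phi>\<close>-chains above \<open>b\<close> whose least point is \<open>t j\<close>.\<close>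
definition phi_chains_starting_at :: "(real \<Rightarrow> real) \<Rightarrow> nat set \<Rightarrow> real \<Rightarrow> nat \<Rightarrow> (nat \<Rightarrow> real) set" where
  "phi_chains_starting_at \<phi> J b j = {t. b < t j \<and> t \<in> phi_chains_above \<phi> (J - {j}) (\<phi> (t j))}"

lemma pred_phi_chains_above:
  assumes cont: "continuous_on {0..1} \<phi>" and "finite K" "K \<subseteq> J"
  shows "Measurable.pred (unit_cube J) (\<lambda>t. t \<in> phi_chains_above \<phi> K b)"
  unfolding phi_chains_above_def mem_Collect_eq using assms
  by (intro pred_intros_logic pred_intros_finite(3) pred_phi_chain borel_measurable_pred_less
      measurable_const measurable_unit_cube_component) auto

lemma pred_phi_chains_starting_at:
  assumes cont: "continuous_on {0..1} \<phi>" and "finite J" "j \<in> J"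
  shows "Measurable.pred (unit_cube J) (\<lambda>t. t \<in> phi_chains_starting_at \<phi> J b j)"
  unfolding phi_chains_starting_at_def phi_chains_above_def mem_Collect_eq using assms
  by (intro pred_intros_logic pred_intros_finite(3) pred_phi_chain borel_measurable_pred_less
      measurable_const measurable_unit_cube_component measurable_unit_cube_phi_component) auto

lemma phi_chains_above_has_start:
  assumes fin: "finite J" and ne: "J \<noteq> {}" and chain: "t \<in> phi_chains_above \<phi> J b"
  obtains j where "j \<in> J" "t \<in> phi_chains_starting_at \<phi> J b j"
proof -
  from chain have inj: "inj_on t J"
    and sep: "\<And>i k. i \<in> J \<Longrightarrow> k \<in> J \<Longrightarrow> t i < t k \<Longrightarrow> \<phi> (t i) < t k" and gt: "\<And>i. i \<in> J \<Longrightarrow> b < t i"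
    by (auto simp: phi_chains_above_def phi_chain_def)
  have "Min (t ` J) \<in> t ` J" using fin ne by simp
  then obtain j where j: "j \<in> J" "t j = Min (t ` J)" by (metis imageE)
  have "\<phi> (t j) < t i" if i: "i \<in> J - {j}" for i
  proof -
    have "t j \<le> t i" unfolding j(2) using fin i by (intro Min_le) auto
    moreover have "t j \<noteq> t i" using inj_onD[OF inj, of j i] j(1) i by auto
    ultimately show ?thesis using sep[of j i] j(1) i by simp
  qed
  moreover have "phi_chain \<phi> (J - {j}) t"
    unfolding phi_chain_def using inj_on_subset[OF inj, of "J - {j}"] sep by blast
  ultimately have "t \<in> phi_chains_starting_at \<phi> J b j"
    using gt j(1) by (simp add: phi_chains_starting_at_def phi_chains_above_def)
  with j(1) show ?thesis by (rule that)
qed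

lemma phi_chains_starting_at_imp_above:
  assumes j: "j \<in> J" and above: "t j \<le> \<phi> (t j)" and start: "t \<in> phi_chains_starting_at \<phi> J b j"
  shows "t \<in> phi_chains_above \<phi> J b"
proof -
  from start have b: "b < t j" and chain: "phi_chain \<phi> (J - {j}) t"
    and first: "\<And>i. i \<in> J - {j} \<Longrightarrow> \<phi> (t j) < t i"
    by (auto simp: phi_chains_starting_at_def phi_chains_above_def)
  have least: "t j < t i" if "i \<in> J - {j}" for i
    using above first[OF that] by simp
  from chain have chain_inj: "inj_on t (J - {j})"
    and chain_sep: "\<And>i k. i \<in> J - {j} \<Longrightarrow> k \<in> J - {j} \<Longrightarrow> t i < t k \<Longrightarrow> \<phi> (t i) < t k"
    by (auto simp: phi_chain_def)
  have "inj_on t J"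
  proof (rule inj_onI, rule ccontr)
    fix x y assume xy: "x \<in> J" "y \<in> J" "t x = t y" "x \<noteq> y"
    consider "x = j" | "y = j" | "x \<in> J - {j}" "y \<in> J - {j}" using xy(1,2) by blast
    thus False
    proof cases
      case 1
      thus False using least[of y] xy by simp
    next
      case 2
      thus False using least[of x] xy by simp
    next
      case 3
      thus False using inj_onD[OF chain_inj] xy by blast
    qed
  qed
  moreover have "\<phi> (t i) < t k" if ik: "i \<in> J" "k \<in> J" "t i < t k" for i k
  proof (cases "i = j")
    case True
    thus ?thesis using first[of k] ik by auto
  next
    case False
    moreover have "k \<noteq> j" using least[of i] ik False by auto
    ultimately show ?thesis using chain_sep ik by simp
  qed
  moreover have "b < t i" if "i \<in> J" for i
    using b least[of i] that by (cases "i = j") auto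
  ultimately show ?thesis by (simp add: phi_chains_above_def phi_chain_def)
qed

lemma phi_chains_above_fun_upd:
  assumes "j \<notin> K"
  shows "t(j := y) \<in> phi_chains_above \<phi> K c \<longleftrightarrow> t \<in> phi_chains_above \<phi> K c"
proof -
  have same: "\<And>i. i \<in> K \<Longrightarrow> (t(j := y)) i = t i" using assms by auto
  hence "inj_on (t(j := y)) K \<longleftrightarrow> inj_on t K" by (rule inj_on_cong)
  thus ?thesis using same by (simp add: phi_chains_above_def phi_chain_def)
qed

lemma phi_chains_starting_at_unique:
  assumes "j \<in> J" "j' \<in> J" "t j \<le> \<phi> (t j)" "t j' \<le> \<phi> (t j')"
    and "t \<in> phi_chains_starting_at \<phi> J b j" "t \<in> phi_chains_starting_at \<phi> J b j'"
  shows "j = j'"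
proof (rule ccontr)
  assume "j \<noteq> j'"
  hence "\<phi> (t j) < t j'" "\<phi> (t j') < t j"
    using assms by (auto simp: phi_chains_starting_at_def phi_chains_above_def)
  thus False using assms(3,4) by simp
qed

lemma indicator_phi_chains_above_eq_sum:
  assumes fin: "finite J" and ne: "J \<noteq> {}" and above: "\<And>i. i \<in> J \<Longrightarrow> t i \<le> \<phi> (t i)"
  shows "indicator (phi_chains_above \<phi> J b) t
    = (\<Sum>j\<in>J. indicator (phi_chains_starting_at \<phi> J b j) t :: ennreal)"
proof (cases "t \<in> phi_chains_above \<phi> J b")
  case True
  then obtain j0 where j0: "j0 \<in> J" "t \<in> phi_chains_starting_at \<phi> J b j0"
    by (rule phi_chains_above_has_start[OF fin ne])
  have "indicator (phi_chains_starting_at \<phi> J b j) t = (if j = j0 then 1 else 0 :: ennreal)"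
    if j: "j \<in> J" for j
  proof (cases "j = j0")
    case False
    hence "t \<notin> phi_chains_starting_at \<phi> J b j"
      using phi_chains_starting_at_unique[OF j j0(1) above[OF j] above[OF j0(1)] _ j0(2)] by blast
    thus ?thesis using False by simp
  qed (simp add: j0(2))
  thus ?thesis using True j0(1) fin by simp
next
  case False
  hence "t \<notin> phi_chains_starting_at \<phi> J b j" if "j \<in> J" for j
    using phi_chains_starting_at_imp_above[of j J t \<phi>, OF that above[OF that]] by blast
  thus ?thesis using False by simp
qed

lemma nn_integral_unit_interval_above:
  fixes g :: "real \<Rightarrow> real"
  assumes cont: "continuous_on {0..1} g" and nonneg: "\<And>x. x \<in> {0..1} \<Longrightarrow> 0 \<le> g x"
  shows "(\<integral>\<^sup>+y. ennreal (g y) * indicator {b<..} y \<partial>restrict_space lborel {0..1})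
    = ennreal (integral {max 0 b..1} g)"
proof -
  let ?a = "max 0 b"
  have "(\<integral>\<^sup>+y. ennreal (g y) * indicator {b<..} y \<partial>restrict_space lborel {0..1})
      = (\<integral>\<^sup>+y. ennreal (g y) * indicator {b<..} y * indicator {0..1} y \<partial>lborel)"
    by (rule nn_integral_restrict_space) simp
  also have "\<dots> = (\<integral>\<^sup>+y. ennreal (g y) * indicator {?a..1} y \<partial>lborel)"
    by (rule nn_integral_cong_AE)
      (use AE_lborel_singleton[of ?a] in \<open>eventually_elim, auto simp: indicator_def\<close>)
  also have "\<dots> = ennreal (integral {?a..1} g)"
  proof (rule nn_integral_has_integral_lebesgue')
    show "\<And>x. x \<in> {?a..1} \<Longrightarrow> 0 \<le> g x" using nonneg by simp
    have "g integrable_on {?a..1}"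
      by (rule integrable_continuous_interval, rule continuous_on_subset[OF cont]) auto
    thus "(g has_integral integral {?a..1} g) {?a..1}" by (rule integrable_integral)
  qed
  finally show ?thesis .
qed

lemma nn_integral_phi_chains_starting_at_section:
  fixes \<phi> :: "real \<Rightarrow> real"
  assumes cont: "continuous_on {0..1} \<phi>" and fin: "finite J"
  shows "(\<integral>\<^sup>+x. indicator (phi_chains_starting_at \<phi> J b j) (x(j := y)) \<partial>unit_cube (J - {j}))
    = indicator {b<..} y
      * (\<integral>\<^sup>+x. indicator (phi_chains_above \<phi> (J - {j}) (\<phi> y)) x \<partial>unit_cube (J - {j}))"
proof -
  let ?C = "phi_chains_above \<phi> (J - {j}) (\<phi> y)"
  have "x(j := y) \<in> phi_chains_starting_at \<phi> J b j \<longleftrightarrow> b < y \<and> x \<in> ?C" for x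
    using phi_chains_above_fun_upd[of j "J - {j}"] by (simp add: phi_chains_starting_at_def)
  hence "indicator (phi_chains_starting_at \<phi> J b j) (x(j := y))
      = (indicator {b<..} y * indicator ?C x :: ennreal)" for x
    by (simp add: indicator_def)
  moreover have "(indicator ?C :: _ \<Rightarrow> ennreal) \<in> borel_measurable (unit_cube (J - {j}))"
    using fin by (intro borel_measurable_indicator_of_pred pred_phi_chains_above[OF cont]) auto
  ultimately show ?thesis using nn_integral_cmult by simp
qed

text \<open>Fubini in the coordinate of the least point \<open>y = t j\<close>: the remaining points form a
  \<open>\<phi>\<close>-chain above \<open>\<phi> y\<close>.\<close>
lemma nn_integral_phi_chains_starting_at:
  fixes \<phi> :: "real \<Rightarrow> real"
  assumes cont: "continuous_on {0..1} \<phi>" and im: "\<phi> ` {0..1} \<subseteq> {0..1}"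
    and fin: "finite J" and j: "j \<in> J"
    and rest: "\<And>c. (\<integral>\<^sup>+x. indicator (phi_chains_above \<phi> (J - {j}) c) x \<partial>unit_cube (J - {j}))
      = ennreal (fact m * tail_integral \<phi> m c)"
  shows "(\<integral>\<^sup>+t. indicator (phi_chains_starting_at \<phi> J b j) t \<partial>unit_cube J)
    = ennreal (fact m * tail_integral \<phi> (Suc m) b)"
proof -
  let ?U = "restrict_space lborel {0..1::real}"
  let ?S = "phi_chains_starting_at \<phi> J b j"
  interpret product_sigma_finite "\<lambda>_. ?U"
    by (simp add: product_sigma_finite_def prob_space_imp_sigma_finite[OF prob_space_unit_interval])
  have fin': "finite (J - {j})" "j \<notin> J - {j}" using fin by auto
  have meas: "(indicator ?S :: _ \<Rightarrow> ennreal) \<in> borel_measurable (unit_cube J)"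
    by (rule borel_measurable_indicator_of_pred[OF pred_phi_chains_starting_at[OF cont fin j]])
  have "(\<integral>\<^sup>+t. indicator ?S t \<partial>unit_cube (insert j (J - {j})))
      = (\<integral>\<^sup>+y. (\<integral>\<^sup>+x. indicator ?S (x(j := y)) \<partial>unit_cube (J - {j})) \<partial>?U)"
    by (rule product_nn_integral_insert_rev[OF fin']) (simp add: insert_absorb[OF j] meas)
  hence "(\<integral>\<^sup>+t. indicator ?S t \<partial>unit_cube J)
      = (\<integral>\<^sup>+y. (\<integral>\<^sup>+x. indicator ?S (x(j := y)) \<partial>unit_cube (J - {j})) \<partial>?U)"
    by (simp only: insert_Diff[OF j])
  also have "\<dots> = (\<integral>\<^sup>+y. ennreal (fact m * iter_inner \<phi> m y) * indicator {b<..} y \<partial>?U)"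
  proof (rule nn_integral_cong)
    fix y assume "y \<in> space ?U"
    hence "\<phi> y \<in> {0..1}" using im by (auto simp: image_subset_iff)
    thus "(\<integral>\<^sup>+x. indicator ?S (x(j := y)) \<partial>unit_cube (J - {j}))
        = ennreal (fact m * iter_inner \<phi> m y) * indicator {b<..} y"
      using nn_integral_phi_chains_starting_at_section[OF cont fin] rest tail_integral_phi[of \<phi> y]
      by (simp add: mult.commute)
  qed
  also have "\<dots> = ennreal (integral {max 0 b..1} (\<lambda>y. fact m * iter_inner \<phi> m y))"
    using continuous_on_iter_inner[OF cont im] iter_inner_nonneg[OF cont im]
    by (intro nn_integral_unit_interval_above continuous_intros) auto
  also have "\<dots> = ennreal (fact m * tail_integral \<phi> (Suc m) b)"
    by (simp add: tail_integral_def)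
  finally show ?thesis .
qed

text \<open>Every \<open>\<phi>\<close>-chain has a unique least point, and each choice of it contributes the same
  volume; this accounts for the factor \<open>card J\<close> in each step.\<close>
lemma nn_integral_phi_chains_above:
  fixes \<phi> :: "real \<Rightarrow> real"
  assumes cont: "continuous_on {0..1} \<phi>" and im: "\<phi> ` {0..1} \<subseteq> {0..1}"
    and above: "\<And>x. x \<in> {0..1} \<Longrightarrow> x \<le> \<phi> x" and "finite J"
  shows "(\<integral>\<^sup>+t. indicator (phi_chains_above \<phi> J b) t \<partial>unit_cube J)
    = ennreal (fact (card J) * tail_integral \<phi> (card J) b)"
  using \<open>finite J\<close>
proof (induction "card J" arbitrary: J b)
  case 0
  hence "J = {}" by simp
  thus ?case by (simp add: phi_chains_above_def phi_chain_def PiM_empty tail_integral_def)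
next
  case (Suc m)
  let ?S = "phi_chains_starting_at \<phi> J b"
  have fin: "finite J" and ne: "J \<noteq> {}" using Suc by auto
  have "(\<integral>\<^sup>+t. indicator (phi_chains_above \<phi> J b) t \<partial>unit_cube J)
      = (\<integral>\<^sup>+t. (\<Sum>j\<in>J. indicator (?S j) t) \<partial>unit_cube J)"
    using above unit_cube_coordinate
    by (intro nn_integral_cong indicator_phi_chains_above_eq_sum[OF fin ne]) blast
  also have "\<dots> = (\<Sum>j\<in>J. \<integral>\<^sup>+t. indicator (?S j) t \<partial>unit_cube J)"
    by (rule nn_integral_sum)
      (use borel_measurable_indicator_of_pred[OF pred_phi_chains_starting_at[OF cont fin]] in auto)
  also have "\<dots> = (\<Sum>j\<in>J. ennreal (fact m * tail_integral \<phi> (Suc m) b))"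
  proof (rule sum.cong[OF refl])
    fix j assume j: "j \<in> J"
    hence "card (J - {j}) = m" using Suc.hyps(2) fin by simp
    thus "(\<integral>\<^sup>+t. indicator (?S j) t \<partial>unit_cube J)
        = ennreal (fact m * tail_integral \<phi> (Suc m) b)"
      using Suc.hyps(1)[of "J - {j}"] fin
      by (intro nn_integral_phi_chains_starting_at[OF cont im fin j]) auto
  qed
  also have "\<dots> = ennreal (fact (Suc m) * tail_integral \<phi> (Suc m) b)"
    using tail_integral_nonneg[OF cont im, of "Suc m" b] Suc.hyps(2)[symmetric]
    by (simp add: ennreal_of_nat_eq_real_of_nat ennreal_mult' mult.assoc)
  finally show ?case using Suc.hyps(2) by simp
qed

lemma fred_A_Vphi_kernel:
  fixes \<phi> :: "real \<Rightarrow> real"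
  assumes mono: "mono_on {0..1} \<phi>" and cont: "continuous_on {0..1} \<phi>"
    and im: "\<phi> ` {0..1} \<subseteq> {0..1}" and above: "\<And>x. x \<in> {0..1} \<Longrightarrow> x \<le> \<phi> x"
  shows "fred_A (Vphi_kernel \<phi>) n = fact n * tail_integral \<phi> n (-1)"
proof -
  let ?C = "phi_chains_above \<phi> {..<n} (-1)"
  have det_eq: "det (mat n n (\<lambda>(i, j). Vphi_kernel \<phi> (t i) (t j))) = indicator ?C t"
    if "t \<in> space (unit_cube {..<n})" for t
  proof -
    have t: "\<And>i. i < n \<Longrightarrow> t i \<in> {0..1}" using unit_cube_coordinate[OF that] by simp
    hence "t \<in> ?C \<longleftrightarrow> phi_chain \<phi> {..<n} t" by (force simp: phi_chains_above_def)
    thus ?thesis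
      using det_kernel_phi_chain[of n t \<phi>] det_kernel_not_phi_chain[OF mono t] above t
      by (auto simp: indicator_def)
  qed
  have "fred_A (Vphi_kernel \<phi>) n = (\<integral>t. indicator ?C t \<partial>unit_cube {..<n})"
    unfolding fred_A_def by (rule Bochner_Integration.integral_cong[OF refl det_eq])
  also have "\<dots> = enn2real (\<integral>\<^sup>+t. ennreal (indicator ?C t) \<partial>unit_cube {..<n})"
    by (rule integral_eq_nn_integral)
      (use borel_measurable_indicator_of_pred[OF pred_phi_chains_above[OF cont]] in auto)
  also have "\<dots> = fact n * tail_integral \<phi> n (-1)"
    using nn_integral_phi_chains_above[OF cont im above, of "{..<n}"]
      tail_integral_nonneg[OF cont im, of n "-1"] by (simp add: ennreal_indicator)
  finally show ?thesis .
qed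

lemma fact_mult_tail_integral_le_1:
  fixes \<phi> :: "real \<Rightarrow> real"
  assumes cont: "continuous_on {0..1} \<phi>" and im: "\<phi> ` {0..1} \<subseteq> {0..1}"
    and above: "\<And>x. x \<in> {0..1} \<Longrightarrow> x \<le> \<phi> x"
  shows "fact n * tail_integral \<phi> n (-1) \<le> 1"
proof -
  interpret prob_space "unit_cube {..<n}"
    by (rule prob_space_PiM) (rule prob_space_unit_interval)
  have "ennreal (fact n * tail_integral \<phi> n (-1))
      = (\<integral>\<^sup>+t. indicator (phi_chains_above \<phi> {..<n} (-1)) t \<partial>unit_cube {..<n})"
    using nn_integral_phi_chains_above[OF cont im above, of "{..<n}"] by simp
  also have "\<dots> \<le> (\<integral>\<^sup>+t. 1 \<partial>unit_cube {..<n})"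
    by (rule nn_integral_mono) (simp add: indicator_def)
  also have "\<dots> = 1" by (simp add: emeasure_space_1)
  finally show ?thesis by (simp add: ennreal_le_1)
qed

theorem theorem3p2:
  fixes \<phi> :: "real \<Rightarrow> real" and z :: complex
  assumes "mono_on {0..1} \<phi>"
    and "continuous_on {0..1} \<phi>"
    and "\<phi> ` {0..1} \<subseteq> {0..1}"
    and "\<forall>x\<in>{0<..<1}. \<phi> x > x"
  shows "summable (fred_term (Vphi_kernel \<phi>) z)
    \<and> summable (\<lambda>n. (-1)^(Suc n) * z^(Suc n) * of_real (iter_int \<phi> (Suc n)))
    \<and> fredholm_det (Vphi_kernel \<phi>) z
        = 1 + (\<Sum>n. (-1)^(Suc n) * z^(Suc n) * of_real (iter_int \<phi> (Suc n)))"
proof -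
  note mono = assms(1) and cont = assms(2) and im = assms(3)
  have above: "\<And>x. x \<in> {0..1} \<Longrightarrow> x \<le> \<phi> x" by (rule self_le_phi[OF mono im assms(4)])
  define c where "c n = tail_integral \<phi> n (-1)" for n
  have fred_term_eq: "fred_term (Vphi_kernel \<phi>) z n = (-1)^n * z^n * of_real (c n)" for n
    using fred_A_Vphi_kernel[OF mono cont im above, of n] by (simp add: fred_term_def c_def)
  have "norm (fred_term (Vphi_kernel \<phi>) z n) \<le> inverse (fact n) * norm z ^ n" for n
  proof -
    have "0 \<le> c n" "c n \<le> inverse (fact n)"
      using tail_integral_nonneg[OF cont im] fact_mult_tail_integral_le_1[OF cont im above, of n]
      by (auto simp: c_def field_simps)
    thus ?thesis by (simp add: fred_term_eq norm_mult norm_power mult.commute mult_right_mono)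
  qed
  hence summable: "summable (fred_term (Vphi_kernel \<phi>) z)"
    by (intro summable_comparison_test[OF _ summable_exp[of "norm z"]]) auto
  have shift: "(-1)^(Suc n) * z^(Suc n) * of_real (iter_int \<phi> (Suc n))
      = fred_term (Vphi_kernel \<phi>) z (Suc n)" for n
    by (simp add: fred_term_eq c_def tail_integral_def iter_int_def)
  have "fred_term (Vphi_kernel \<phi>) z 0 = 1" by (simp add: fred_term_eq c_def tail_integral_def)
  hence "fredholm_det (Vphi_kernel \<phi>) z = 1 + (\<Sum>n. fred_term (Vphi_kernel \<phi>) z (Suc n))"
    unfolding fredholm_det_def using suminf_split_head[OF summable] by simp
  moreover have "summable (\<lambda>n. fred_term (Vphi_kernel \<phi>) z (Suc n))"
    using summable by (simp only: summable_Suc_iff)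
  ultimately show ?thesis using summable unfolding shift by simp
qed

end
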